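(* Let $F\subseteq\mathcal{U}$ be the set of elements revealed in the first stage, and suppose the Simple algorithm with input a set $J\subset\mathbb{Z}$ is run on the elements of $\mathcal{U}\setminus F$ as they are revealed. Then it returns an independent set $P\subseteq\mathcal{U}\setminus F$ such that $$\mathrm{OPT}(P)\ \ge\ \sum_{j\in J}2^j\cdot\Big(\mathrm{rank}\big(B_{\mathcal{U}\setminus F}(J\setminus\{j\})\cup B_{\mathcal{U}\setminus F}(j)\big)-\mathrm{rank}\big(B_{\mathcal{U}\setminus F}(J\setminus\{j\})\big)\Big).$$
   Context: $M=(\mathcal{U},\mathcal{I})$ is a matroid with $n=|\mathcal{U}|$; $\mathrm{rank}(X)=\max\{|X'|:X'\subseteq X,X'\in\mathcal{I}\}$, $\mathrm{span}(X)=\{e:\mathrm{rank}(X\cup\{e\})=\mathrm{rank}(X)\}$, and $\mathrm{OPT}(X)=\max\{\sum_{e\in X'}\mathrm{val}(e):X'\subseteq X,X'\in\mathcal{I}\}$. Standing assumption: elements of rank $0$ have value $0$, and every element of positive value has value $2^i$ for some $i\in\mathbb{Z}$. For $X\subseteq\mathcal{U}$, $B_X(i)=\{e\in X:\mathrm{val}(e)=2^i\}$, $B_X(I)=\bigcup_{i\in I}B_X(i)$. Logarithms base 2. Setting: the elements of $\mathcal{U}$ are revealed one by one in uniformly random order; $W$ is the number of successes in $n$ independent fair Bernoulli trials, and $F$ is the set of the first $W$ revealed elements (none of which is selected); afterwards the elements of $\mathcal{U}\setminus F$ are revealed one by one. Simple algorithm with input $J$: start with $P=\emptyset$; immediately after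 each element $e\in\mathcal{U}\setminus F$ is revealed, if $\mathrm{val}(e)>0$, $\log\mathrm{val}(e)\in J$ and $e\notin\mathrm{span}(P)$, add $e$ to $P$. Output $P$. *)

theory Defs
  imports Complex_Main
begin

definition matroid :: "'a set \<Rightarrow> 'a set set \<Rightarrow> bool" where
  "matroid U Ind \<longleftrightarrow> finite U \<and> Ind \<subseteq> Pow U \<and> {} \<in> Ind
     \<and> (\<forall>X Y. X \<in> Ind \<and> Y \<subseteq> X \<longrightarrow> Y \<in> Ind)
     \<and> (\<forall>X Y. X \<in> Ind \<and> Y \<in> Ind \<and> card X < card Y \<longrightarrow> (\<exists>e\<in>Y - X. insert e X \<in> Ind))"

definition mrank :: "'a set set \<Rightarrow> 'a set \<Rightarrow> nat" where
  "mrank Ind X = Max {card Y | Y. Y \<subseteq> X \<and> Y \<in> Ind}"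

definition mspan :: "'a set set \<Rightarrow> 'a set \<Rightarrow> 'a set" where
  "mspan Ind X = {e. mrank Ind (insert e X) = mrank Ind X}"

definition OPT :: "'a set set \<Rightarrow> ('a \<Rightarrow> real) \<Rightarrow> 'a set \<Rightarrow> real" where
  "OPT Ind val X = Max {sum val Y | Y. Y \<subseteq> X \<and> Y \<in> Ind}"

definition bucket :: "('a \<Rightarrow> real) \<Rightarrow> 'a set \<Rightarrow> int \<Rightarrow> 'a set" where
  "bucket val X i = {e \<in> X. val e = 2 powr (real_of_int i)}"

definition buckets :: "('a \<Rightarrow> real) \<Rightarrow> 'a set \<Rightarrow> int set \<Rightarrow> 'a set" where
  "buckets val X I = (\<Union>i\<in>I. bucket val X i)"

text \<open>Simple algorithm with input J, run on the revealed sequence xs (the elements of U - F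
  in order of revelation).\<close>
definition simple_step :: "'a set set \<Rightarrow> ('a \<Rightarrow> real) \<Rightarrow> int set \<Rightarrow> 'a set \<Rightarrow> 'a \<Rightarrow> 'a set" where
  "simple_step Ind val J P e =
     (if val e > 0 \<and> log 2 (val e) \<in> real_of_int ` J \<and> e \<notin> mspan Ind P then insert e P else P)"

definition simple_alg :: "'a set set \<Rightarrow> ('a \<Rightarrow> real) \<Rightarrow> int set \<Rightarrow> 'a list \<Rightarrow> 'a set" where
  "simple_alg Ind val J xs = foldl (simple_step Ind val J) {} xs"

end

theory Submission
  imports Defs
begin

text \<open>The Simple algorithm keeps an independent set \<open>P\<close> that is maximal inside the part
  \<open>B(J)\<close> of the stream revealed so far, so at the end \<open>P\<close> is a basis of \<open>B(J)\<close> and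
  \<open>rank B(J) = |P|\<close>. Since \<open>P - B(j)\<close> is an independent subset of \<open>B(J - {j})\<close>, the rank
  gain of bucket \<open>j\<close> is at most \<open>|P \<inter> B(j)|\<close>; weighting by \<open>2^j\<close> and summing over the
  disjoint buckets bounds the right-hand side by \<open>val(P) \<le> OPT(P)\<close>.\<close>

lemma matroid_indep_finite: "matroid U Ind \<Longrightarrow> Y \<in> Ind \<Longrightarrow> finite Y"
  unfolding matroid_def by (meson PowD finite_subset subsetD)

lemma matroid_indep_subset: "matroid U Ind \<Longrightarrow> X \<in> Ind \<Longrightarrow> Y \<subseteq> X \<Longrightarrow> Y \<in> Ind"
  unfolding matroid_def by blast

lemma matroid_augment:
  "matroid U Ind \<Longrightarrow> X \<in> Ind \<Longrightarrow> Y \<in> Ind \<Longrightarrow> card X < card Y \<Longrightarrow> \<exists>e\<in>Y - X. insert e X \<in> Ind"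
  unfolding matroid_def by blast

lemma finite_mrank_candidates:
  assumes "matroid U Ind"
  shows "finite {card Y | Y. Y \<subseteq> X \<and> Y \<in> Ind}"
proof -
  have "finite Ind"
    using assms unfolding matroid_def by (meson finite_Pow_iff rev_finite_subset)
  then show ?thesis
    by (rule finite_subset[rotated, OF finite_imageI]) blast
qed

lemma card_le_mrank: "matroid U Ind \<Longrightarrow> Y \<subseteq> X \<Longrightarrow> Y \<in> Ind \<Longrightarrow> card Y \<le> mrank Ind X"
  unfolding mrank_def by (rule Max_ge[OF finite_mrank_candidates]) auto

lemma exists_indep_card_eq_mrank:
  assumes "matroid U Ind"
  obtains Y where "Y \<subseteq> X" "Y \<in> Ind" "card Y = mrank Ind X"
proof -
  have "{} \<in> Ind" using assms unfolding matroid_def by blast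
  then have "mrank Ind X \<in> {card Y | Y. Y \<subseteq> X \<and> Y \<in> Ind}"
    unfolding mrank_def by (intro Max_in[OF finite_mrank_candidates[OF assms]]) auto
  then show thesis by (auto intro: that)
qed

definition is_basis :: "'a set set \<Rightarrow> 'a set \<Rightarrow> 'a set \<Rightarrow> bool" where
  "is_basis Ind X P \<longleftrightarrow> P \<in> Ind \<and> P \<subseteq> X \<and> (\<forall>x\<in>X. x \<in> P \<or> insert x P \<notin> Ind)"

lemma mrank_eq_card_basis:
  assumes m: "matroid U Ind" and "is_basis Ind X P"
  shows "mrank Ind X = card P"
proof -
  note P = assms(2)[unfolded is_basis_def]
  obtain Y where Y: "Y \<subseteq> X" "Y \<in> Ind" "card Y = mrank Ind X"
    using exists_indep_card_eq_mrank[OF m] .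
  have "\<not> card P < card Y"
  proof
    assume "card P < card Y"
    then obtain x where "x \<in> Y - P" "insert x P \<in> Ind"
      using matroid_augment[OF m _ Y(2)] P by blast
    with Y(1) P show False by blast
  qed
  moreover have "card P \<le> mrank Ind X" using card_le_mrank[OF m] P by blast
  ultimately show ?thesis using Y(3) by linarith
qed

lemma mrank_indep: "matroid U Ind \<Longrightarrow> P \<in> Ind \<Longrightarrow> mrank Ind P = card P"
  by (rule mrank_eq_card_basis) (auto simp: is_basis_def)

lemma mem_mspan_indep_iff:
  assumes m: "matroid U Ind" and P: "P \<in> Ind"
  shows "e \<in> mspan Ind P \<longleftrightarrow> e \<in> P \<or> insert e P \<notin> Ind"
proof (cases "e \<in> P \<or> insert e P \<notin> Ind")
  case True
  then have "mrank Ind (insert e P) = card P"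
    using mrank_eq_card_basis[OF m, of "insert e P" P] P by (auto simp: is_basis_def insert_absorb)
  with True show ?thesis unfolding mspan_def using mrank_indep[OF m P] by simp
next
  case False
  then have "mrank Ind (insert e P) = Suc (card P)"
    using mrank_indep[OF m] matroid_indep_finite[OF m P] by simp
  with False show ?thesis unfolding mspan_def using mrank_indep[OF m P] by simp
qed

text \<open>The key point is that \<open>P - C\<close> is an independent subset of \<open>A\<close>.\<close>
lemma mrank_Un_le_card_Int:
  assumes m: "matroid U Ind" and P: "P \<in> Ind" "P \<subseteq> A \<union> C"
    and rank_P: "mrank Ind (A \<union> C) = card P"
  shows "mrank Ind (A \<union> C) \<le> mrank Ind A + card (P \<inter> C)"
proof -
  have "card (P - C) \<le> mrank Ind A"
    using P by (intro card_le_mrank[OF m] matroid_indep_subset[OF m P(1)]) auto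
  moreover have "card P = card (P - C) + card (P \<inter> C)"
    using card_Int_Diff[OF matroid_indep_finite[OF m P(1)], of C] by linarith
  ultimately show ?thesis using rank_P by linarith
qed

lemma sum_le_OPT:
  assumes "finite X" "Y \<subseteq> X" "Y \<in> Ind"
  shows "sum val Y \<le> OPT Ind val X"
  unfolding OPT_def
proof (rule Max_ge)
  have "{sum val Y | Y. Y \<subseteq> X \<and> Y \<in> Ind} \<subseteq> sum val ` Pow X" by blast
  then show "finite {sum val Y | Y. Y \<subseteq> X \<and> Y \<in> Ind}"
    using assms(1) by (meson finite_Pow_iff finite_imageI finite_subset)
qed (use assms in blast)

lemma eq_powr_iff_log: "y = 2 powr x \<longleftrightarrow> y > 0 \<and> log 2 y = x"
  by auto

lemma mem_buckets_iff_log: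
  "e \<in> buckets val X J \<longleftrightarrow> e \<in> X \<and> val e > 0 \<and> log 2 (val e) \<in> real_of_int ` J"
  unfolding buckets_def bucket_def eq_powr_iff_log by auto

lemma buckets_subset: "buckets val X J \<subseteq> X"
  unfolding buckets_def bucket_def by blast

lemma buckets_Diff_Un_bucket: "j \<in> J \<Longrightarrow> buckets val X (J - {j}) \<union> bucket val X j = buckets val X J"
  unfolding buckets_def by blast

lemma disjoint_bucket: "i \<noteq> j \<Longrightarrow> bucket val X i \<inter> bucket val X j = {}"
  unfolding bucket_def by (auto simp: powr_inj)

lemma finite_nonempty_buckets:
  assumes "finite X"
  shows "finite {j. bucket val X j \<noteq> {}}"
proof -
  have "{j. bucket val X j \<noteq> {}} \<subseteq> (\<lambda>x. \<lfloor>log 2 (val x)\<rfloor>) ` X"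
    unfolding bucket_def by force
  then show ?thesis using assms finite_surj by blast
qed

lemma sum_val_eq_sum_buckets:
  assumes "finite X" "P \<subseteq> buckets val X J"
  shows "sum val P = (\<Sum>j\<in>{j \<in> J. bucket val X j \<noteq> {}}. 2 powr real_of_int j * card (P \<inter> bucket val X j))"
proof -
  let ?S = "{j \<in> J. bucket val X j \<noteq> {}}"
  have finite_P: "finite P"
    using assms rev_finite_subset unfolding buckets_def bucket_def by blast
  have P_eq: "P = (\<Union>j\<in>?S. P \<inter> bucket val X j)"
    using assms(2) unfolding buckets_def by blast
  have "sum val P = (\<Sum>j\<in>?S. sum val (P \<inter> bucket val X j))"
  proof (subst P_eq, rule sum.UNION_disjoint)
    show "finite ?S"
      using finite_nonempty_buckets[OF assms(1)] by (rule rev_finite_subset) blast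
    show "\<forall>i\<in>?S. \<forall>j\<in>?S. i \<noteq> j \<longrightarrow> P \<inter> bucket val X i \<inter> (P \<inter> bucket val X j) = {}"
      using disjoint_bucket by (metis inf_assoc inf_bot_right inf_left_commute)
  qed (use finite_P in blast)
  also have "\<dots> = (\<Sum>j\<in>?S. 2 powr real_of_int j * card (P \<inter> bucket val X j))"
    by (rule sum.cong) (auto simp: bucket_def)
  finally show ?thesis .
qed

lemma simple_alg_is_basis:
  assumes m: "matroid U Ind"
  shows "is_basis Ind (buckets val (set xs) J) (simple_alg Ind val J xs)"
proof (induction xs rule: rev_induct)
  case Nil
  show ?case
    using m unfolding simple_alg_def matroid_def is_basis_def buckets_def bucket_def by simp
next
  case (snoc x xs)
  define P where "P = simple_alg Ind val J xs"
  have IH: "P \<in> Ind" "P \<subseteq> buckets val (set xs) J"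
    "\<forall>y\<in>buckets val (set xs) J. y \<in> P \<or> insert y P \<notin> Ind"
    using snoc unfolding P_def is_basis_def by auto
  have step: "simple_alg Ind val J (xs @ [x]) = simple_step Ind val J P x"
    unfolding simple_alg_def P_def by simp
  have buckets_snoc: "y \<in> buckets val (set (xs @ [x])) J \<longleftrightarrow>
      y \<in> buckets val (set xs) J \<or> y = x \<and> x \<in> buckets val {x} J" for y
    unfolding mem_buckets_iff_log by auto
  show ?case
  proof (cases "x \<in> buckets val {x} J \<and> x \<notin> mspan Ind P")
    case True
    then have added: "simple_step Ind val J P x = insert x P" "insert x P \<in> Ind"
      unfolding simple_step_def mem_buckets_iff_log
      using mem_mspan_indep_iff[OF m IH(1)] by auto
    have "\<forall>y\<in>buckets val (set xs) J. y \<in> insert x P \<or> insert y (insert x P) \<notin> Ind"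
      using IH(3) matroid_indep_subset[OF m] by (metis insert_commute insert_iff subset_insertI)
    then show ?thesis
      unfolding step added(1) is_basis_def using True added(2) IH(2) buckets_snoc by auto
  next
    case False
    then have "simple_step Ind val J P x = P"
      unfolding simple_step_def mem_buckets_iff_log by auto
    moreover have "x \<in> buckets val {x} J \<longrightarrow> x \<in> P \<or> insert x P \<notin> Ind"
      using False mem_mspan_indep_iff[OF m IH(1)] by blast
    ultimately show ?thesis unfolding step is_basis_def using IH buckets_snoc by auto
  qed
qed

theorem theorem1:
  fixes U :: "'a set" and Ind :: "'a set set" and val :: "'a \<Rightarrow> real"
    and F :: "'a set" and xs :: "'a list" and J :: "int set"
  assumes "matroid U Ind"
    and "\<And>e. e \<in> U \<Longrightarrow> mrank Ind {e} = 0 \<Longrightarrow> val e = 0"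
    and "\<And>e. e \<in> U \<Longrightarrow> val e > 0 \<Longrightarrow> \<exists>i::int. val e = 2 powr (real_of_int i)"
    and "F \<subseteq> U"
    and "distinct xs" and "set xs = U - F"
  shows "simple_alg Ind val J xs \<in> Ind \<and> simple_alg Ind val J xs \<subseteq> U - F \<and>
    OPT Ind val (simple_alg Ind val J xs) \<ge>
      (\<Sum>j\<in>{j \<in> J. bucket val (U - F) j \<noteq> {}}.
         2 powr (real_of_int j) *
         (real (mrank Ind (buckets val (U - F) (J - {j}) \<union> bucket val (U - F) j))
          - real (mrank Ind (buckets val (U - F) (J - {j})))))"
proof -
  note m = assms(1)
  define P where "P = simple_alg Ind val J xs"
  define B where "B j = bucket val (U - F) j" for j
  have finite: "finite (U - F)" using m by (simp add: matroid_def)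
  have basis: "is_basis Ind (buckets val (U - F) J) P"
    using simple_alg_is_basis[OF m, where val = val and J = J and xs = xs] unfolding P_def assms(6) .
  then have P: "P \<in> Ind" "P \<subseteq> buckets val (U - F) J"
    and rank_P: "mrank Ind (buckets val (U - F) J) = card P"
    using mrank_eq_card_basis[OF m] unfolding is_basis_def by blast+
  have gain: "real (mrank Ind (buckets val (U - F) (J - {j}) \<union> B j))
      - real (mrank Ind (buckets val (U - F) (J - {j}))) \<le> card (P \<inter> B j)" if "j \<in> J" for j
  proof -
    have "mrank Ind (buckets val (U - F) (J - {j}) \<union> B j)
        \<le> mrank Ind (buckets val (U - F) (J - {j})) + card (P \<inter> B j)"
      by (rule mrank_Un_le_card_Int[OF m P(1)])
        (simp_all add: B_def buckets_Diff_Un_bucket[OF that] P(2) rank_P)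
    then show ?thesis by linarith
  qed
  have "(\<Sum>j\<in>{j \<in> J. B j \<noteq> {}}. 2 powr real_of_int j *
      (real (mrank Ind (buckets val (U - F) (J - {j}) \<union> B j))
       - real (mrank Ind (buckets val (U - F) (J - {j})))))
      \<le> (\<Sum>j\<in>{j \<in> J. B j \<noteq> {}}. 2 powr real_of_int j * card (P \<inter> B j))"
    using gain by (intro sum_mono mult_left_mono) auto
  also have "\<dots> = sum val P"
    unfolding B_def using sum_val_eq_sum_buckets[OF finite P(2)] by simp
  also have "\<dots> \<le> OPT Ind val P"
    using sum_le_OPT[OF matroid_indep_finite[OF m P(1)] order_refl P(1)] .
  finally show ?thesis
    using P(1) subset_trans[OF P(2) buckets_subset] unfolding P_def B_def by simp
qed

end
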